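(* Let $K$ be a simplicial Abelian group (written multiplicatively) and $X$ a simplicial set. Viewing the commutative monoid $\mathrm{Twist}_K(X)$ of $K$-valued twisting functions on $X$ (under levelwise product) as a discrete symmetric monoidal category, the functor $\mathrm{Twist}_K(X)\to\mathsf{Bun}_K(X)$, $\eta\mapsto K\times_\eta X$, is symmetric monoidal, with structure isomorphisms the canonical isomorphism $K\times_1X\cong K\times X$ and the isomorphisms $(K\times_\eta X)\otimes_K(K\times_\xi X)\to K\times_{\eta\xi}X$, $[(k,x),(h,x)]\mapsto(kh,x)$.
   Context: A twisting function $\eta=\{\eta_n:X_n\to K_{n-1}\}_{n\ge1}$ is one for which $d_i(g,x)=(d_ig,d_ix)$ ($i>0$), $d_0(g,x)=(d_0(g)\eta_n(x),d_0x)$, $s_i(g,x)=(s_ig,s_ix)$ make $\{K_n\times X_n\}$ a simplicial set $K\times_\eta X$, a principal $K$-bundle over $X$ via left multiplication on the first factor; $1$ denotes the trivial twisting function. $\mathsf{Bun}_K(X)$ is the groupoid of principal $K$-bundles over $X$ (simplicial sets with levelwise free left $K$-action and quotient map to $X$; morphisms are equivariant maps over $X$), symmetric monoidal under $E\otimes_KF=(E\times_XF)/((ke,f)\sim(e,kf))$ with unit $K\times X$, associator $[e,[f,g]]\mapsto[[e,f],g]$ and braiding $[e,f]\mapsto[f,e]$. *)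

theory Defs
  imports "HOL-Algebra.Group"
begin

text \<open>face S n i : level n to level n-1 (n \<ge> 1, i \<le> n);
      degen S n i : level n to level n+1 (i \<le> n).\<close>

record 'a sset =
  cells :: "nat \<Rightarrow> 'a set"
  face  :: "nat \<Rightarrow> nat \<Rightarrow> 'a \<Rightarrow> 'a"
  degen :: "nat \<Rightarrow> nat \<Rightarrow> 'a \<Rightarrow> 'a"

definition is_sset :: "('a, 'b) sset_scheme \<Rightarrow> bool" where
  "is_sset S \<longleftrightarrow>
     (\<forall>n i x. 1 \<le> n \<and> i \<le> n \<and> x \<in> cells S n \<longrightarrow> face S n i x \<in> cells S (n - 1)) \<and>
     (\<forall>n i x. i \<le> n \<and> x \<in> cells S n \<longrightarrow> degen S n i x \<in> cells S (Suc n)) \<and>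
     (\<forall>n i j x. 2 \<le> n \<and> i < j \<and> j \<le> n \<and> x \<in> cells S n \<longrightarrow>
        face S (n - 1) i (face S n j x) = face S (n - 1) (j - 1) (face S n i x)) \<and>
     (\<forall>n i j x. i < j \<and> j \<le> n \<and> x \<in> cells S n \<longrightarrow>
        face S (Suc n) i (degen S n j x) = degen S (n - 1) (j - 1) (face S n i x)) \<and>
     (\<forall>n j x. j \<le> n \<and> x \<in> cells S n \<longrightarrow>
        face S (Suc n) j (degen S n j x) = x \<and> face S (Suc n) (Suc j) (degen S n j x) = x) \<and>
     (\<forall>n i j x. Suc j < i \<and> i \<le> Suc n \<and> x \<in> cells S n \<longrightarrow>
        face S (Suc n) i (degen S n j x) = degen S (n - 1) j (face S n (i - 1) x)) \<and>
     (\<forall>n i j x. i \<le> j \<and> j \<le> n \<and> x \<in> cells S n \<longrightarrow>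
        degen S (Suc n) i (degen S n j x) = degen S (Suc n) (Suc j) (degen S n i x))"

definition smap :: "('a, 'c) sset_scheme \<Rightarrow> ('b, 'd) sset_scheme \<Rightarrow> (nat \<Rightarrow> 'a \<Rightarrow> 'b) \<Rightarrow> bool" where
  "smap S T f \<longleftrightarrow>
     (\<forall>n x. x \<in> cells S n \<longrightarrow> f n x \<in> cells T n) \<and>
     (\<forall>n i x. 1 \<le> n \<and> i \<le> n \<and> x \<in> cells S n \<longrightarrow> f (n - 1) (face S n i x) = face T n i (f n x)) \<and>
     (\<forall>n i x. i \<le> n \<and> x \<in> cells S n \<longrightarrow> f (Suc n) (degen S n i x) = degen T n i (f n x))"

record 'a sgrp = "'a sset" +
  gmul :: "nat \<Rightarrow> 'a \<Rightarrow> 'a \<Rightarrow> 'a"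
  gone :: "nat \<Rightarrow> 'a"

definition lev :: "'a sgrp \<Rightarrow> nat \<Rightarrow> 'a monoid" where
  "lev K n = \<lparr>carrier = cells K n, mult = gmul K n, one = gone K n\<rparr>"

definition is_sab_group :: "'a sgrp \<Rightarrow> bool" where
  "is_sab_group K \<longleftrightarrow> is_sset K \<and> (\<forall>n. comm_group (lev K n)) \<and>
     (\<forall>n i. 1 \<le> n \<and> i \<le> n \<longrightarrow> face K n i \<in> hom (lev K n) (lev K (n - 1))) \<and>
     (\<forall>n i. i \<le> n \<longrightarrow> degen K n i \<in> hom (lev K n) (lev K (Suc n)))"

definition tw_sset :: "'k sgrp \<Rightarrow> 'x sset \<Rightarrow> (nat \<Rightarrow> 'x \<Rightarrow> 'k) \<Rightarrow> ('k \<times> 'x) sset" where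
  "tw_sset K X \<eta> = \<lparr>cells = (\<lambda>n. cells K n \<times> cells X n),
     face = (\<lambda>n i (g, x). if i = 0
               then (gmul K (n - 1) (face K n 0 g) (\<eta> n x), face X n 0 x)
               else (face K n i g, face X n i x)),
     degen = (\<lambda>n i (g, x). (degen K n i g, degen X n i x))\<rparr>"

definition is_twisting :: "'k sgrp \<Rightarrow> 'x sset \<Rightarrow> (nat \<Rightarrow> 'x \<Rightarrow> 'k) \<Rightarrow> bool" where
  "is_twisting K X \<eta> \<longleftrightarrow>
     (\<forall>n x. 1 \<le> n \<and> x \<in> cells X n \<longrightarrow> \<eta> n x \<in> cells K (n - 1)) \<and> is_sset (tw_sset K X \<eta>)"

definition tw_one :: "'k sgrp \<Rightarrow> nat \<Rightarrow> 'x \<Rightarrow> 'k" where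
  "tw_one K = (\<lambda>n x. gone K (n - 1))"

definition tw_mult :: "'k sgrp \<Rightarrow> (nat \<Rightarrow> 'x \<Rightarrow> 'k) \<Rightarrow> (nat \<Rightarrow> 'x \<Rightarrow> 'k) \<Rightarrow> nat \<Rightarrow> 'x \<Rightarrow> 'k" where
  "tw_mult K \<eta> \<xi> = (\<lambda>n x. gmul K (n - 1) (\<eta> n x) (\<xi> n x))"

record ('e, 'k, 'x) pbun =
  tot  :: "'e sset"
  act  :: "nat \<Rightarrow> 'k \<Rightarrow> 'e \<Rightarrow> 'e"
  proj :: "nat \<Rightarrow> 'e \<Rightarrow> 'x"

definition is_pbun :: "'k sgrp \<Rightarrow> 'x sset \<Rightarrow> ('e, 'k, 'x) pbun \<Rightarrow> bool" where
  "is_pbun K X E \<longleftrightarrow> is_sset (tot E) \<and> smap (tot E) X (proj E) \<and>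
     (\<forall>n k e. k \<in> cells K n \<and> e \<in> cells (tot E) n \<longrightarrow> act E n k e \<in> cells (tot E) n) \<and>
     (\<forall>n e. e \<in> cells (tot E) n \<longrightarrow> act E n (gone K n) e = e) \<and>
     (\<forall>n k h e. k \<in> cells K n \<and> h \<in> cells K n \<and> e \<in> cells (tot E) n \<longrightarrow>
        act E n (gmul K n k h) e = act E n k (act E n h e)) \<and>
     (\<forall>n i k e. 1 \<le> n \<and> i \<le> n \<and> k \<in> cells K n \<and> e \<in> cells (tot E) n \<longrightarrow>
        face (tot E) n i (act E n k e) = act E (n - 1) (face K n i k) (face (tot E) n i e)) \<and>
     (\<forall>n i k e. i \<le> n \<and> k \<in> cells K n \<and> e \<in> cells (tot E) n \<longrightarrow>
        degen (tot E) n i (act E n k e) = act E (Suc n) (degen K n i k) (degen (tot E) n i e)) \<and>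
     (\<forall>n k e. k \<in> cells K n \<and> e \<in> cells (tot E) n \<and> act E n k e = e \<longrightarrow> k = gone K n) \<and>
     (\<forall>n. proj E n ` cells (tot E) n = cells X n) \<and>
     (\<forall>n e e'. e \<in> cells (tot E) n \<and> e' \<in> cells (tot E) n \<longrightarrow>
        (proj E n e = proj E n e' \<longleftrightarrow> (\<exists>k \<in> cells K n. e' = act E n k e)))"

definition bun_hom :: "'k sgrp \<Rightarrow> 'x sset \<Rightarrow> ('e, 'k, 'x) pbun \<Rightarrow> ('f, 'k, 'x) pbun
    \<Rightarrow> (nat \<Rightarrow> 'e \<Rightarrow> 'f) \<Rightarrow> bool" where
  "bun_hom K X E F f \<longleftrightarrow> smap (tot E) (tot F) f \<and>
     (\<forall>n k e. k \<in> cells K n \<and> e \<in> cells (tot E) n \<longrightarrow> f n (act E n k e) = act F n k (f n e)) \<and>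
     (\<forall>n e. e \<in> cells (tot E) n \<longrightarrow> proj F n (f n e) = proj E n e)"

definition bun_iso :: "'k sgrp \<Rightarrow> 'x sset \<Rightarrow> ('e, 'k, 'x) pbun \<Rightarrow> ('f, 'k, 'x) pbun
    \<Rightarrow> (nat \<Rightarrow> 'e \<Rightarrow> 'f) \<Rightarrow> bool" where
  "bun_iso K X E F f \<longleftrightarrow> is_pbun K X E \<and> is_pbun K X F \<and> bun_hom K X E F f \<and>
     (\<exists>g. bun_hom K X F E g \<and>
        (\<forall>n e. e \<in> cells (tot E) n \<longrightarrow> g n (f n e) = e) \<and>
        (\<forall>n y. y \<in> cells (tot F) n \<longrightarrow> f n (g n y) = y))"

definition tw_bun :: "'k sgrp \<Rightarrow> 'x sset \<Rightarrow> (nat \<Rightarrow> 'x \<Rightarrow> 'k) \<Rightarrow> ('k \<times> 'x, 'k, 'x) pbun" where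
  "tw_bun K X \<eta> = \<lparr>tot = tw_sset K X \<eta>,
     act = (\<lambda>n k (g, x). (gmul K n k g, x)), proj = (\<lambda>n. snd)\<rparr>"

definition prod_bun :: "'k sgrp \<Rightarrow> 'x sset \<Rightarrow> ('k \<times> 'x, 'k, 'x) pbun" where
  "prod_bun K X = \<lparr>tot = \<lparr>cells = (\<lambda>n. cells K n \<times> cells X n),
        face = (\<lambda>n i (g, x). (face K n i g, face X n i x)),
        degen = (\<lambda>n i (g, x). (degen K n i g, degen X n i x))\<rparr>,
     act = (\<lambda>n k (g, x). (gmul K n k g, x)), proj = (\<lambda>n. snd)\<rparr>"

definition fibprod :: "('e, 'k, 'x) pbun \<Rightarrow> ('f, 'k, 'x) pbun \<Rightarrow> nat \<Rightarrow> ('e \<times> 'f) set" where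
  "fibprod E F n = {(e, f). e \<in> cells (tot E) n \<and> f \<in> cells (tot F) n \<and> proj E n e = proj F n f}"

definition tgen :: "'k sgrp \<Rightarrow> ('e, 'k, 'x) pbun \<Rightarrow> ('f, 'k, 'x) pbun \<Rightarrow> nat
    \<Rightarrow> (('e \<times> 'f) \<times> ('e \<times> 'f)) set" where
  "tgen K E F n = {((act E n k e, f), (e, act F n k f)) | k e f.
      k \<in> cells K n \<and> (e, f) \<in> fibprod E F n \<and> (act E n k e, f) \<in> fibprod E F n \<and>
      (e, act F n k f) \<in> fibprod E F n}"

definition trel :: "'k sgrp \<Rightarrow> ('e, 'k, 'x) pbun \<Rightarrow> ('f, 'k, 'x) pbun \<Rightarrow> nat
    \<Rightarrow> (('e \<times> 'f) \<times> ('e \<times> 'f)) set" where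
  "trel K E F n = (tgen K E F n \<union> (tgen K E F n)\<inverse>)\<^sup>*"

definition tcls :: "'k sgrp \<Rightarrow> ('e, 'k, 'x) pbun \<Rightarrow> ('f, 'k, 'x) pbun \<Rightarrow> nat
    \<Rightarrow> 'e \<times> 'f \<Rightarrow> ('e \<times> 'f) set" where
  "tcls K E F n p = trel K E F n `` {p}"

definition trep :: "'a set \<Rightarrow> 'a" where
  "trep c = (SOME p. p \<in> c)"

definition tensor :: "'k sgrp \<Rightarrow> ('e, 'k, 'x) pbun \<Rightarrow> ('f, 'k, 'x) pbun
    \<Rightarrow> (('e \<times> 'f) set, 'k, 'x) pbun" where
  "tensor K E F = \<lparr>tot = \<lparr>cells = (\<lambda>n. fibprod E F n // trel K E F n),
       face = (\<lambda>n i c. tcls K E F (n - 1)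
                (face (tot E) n i (fst (trep c)), face (tot F) n i (snd (trep c)))),
       degen = (\<lambda>n i c. tcls K E F (Suc n)
                (degen (tot E) n i (fst (trep c)), degen (tot F) n i (snd (trep c))))\<rparr>,
     act = (\<lambda>n k c. tcls K E F n (act E n k (fst (trep c)), snd (trep c))),
     proj = (\<lambda>n c. proj E n (fst (trep c)))\<rparr>"

definition tmap :: "'k sgrp \<Rightarrow> ('e', 'k, 'x) pbun \<Rightarrow> ('f', 'k, 'x) pbun
    \<Rightarrow> (nat \<Rightarrow> 'e \<Rightarrow> 'e') \<Rightarrow> (nat \<Rightarrow> 'f \<Rightarrow> 'f') \<Rightarrow> nat \<Rightarrow> ('e \<times> 'f) set \<Rightarrow> ('e' \<times> 'f') set" where
  "tmap K E' F' f g n c = tcls K E' F' n (f n (fst (trep c)), g n (snd (trep c)))"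

definition assocB :: "'k sgrp \<Rightarrow> ('e, 'k, 'x) pbun \<Rightarrow> ('f, 'k, 'x) pbun \<Rightarrow> ('g, 'k, 'x) pbun
    \<Rightarrow> nat \<Rightarrow> ('e \<times> ('f \<times> 'g) set) set \<Rightarrow> (('e \<times> 'f) set \<times> 'g) set" where
  "assocB K E F G n w =
     (let e = fst (trep w); fg = trep (snd (trep w))
      in tcls K (tensor K E F) G n (tcls K E F n (e, fst fg), snd fg))"

definition braidB :: "'k sgrp \<Rightarrow> ('e, 'k, 'x) pbun \<Rightarrow> ('f, 'k, 'x) pbun
    \<Rightarrow> nat \<Rightarrow> ('e \<times> 'f) set \<Rightarrow> ('f \<times> 'e) set" where
  "braidB K E F n c = tcls K F E n (snd (trep c), fst (trep c))"

definition lunitB :: "('e, 'k, 'x) pbun \<Rightarrow> nat \<Rightarrow> (('k \<times> 'x) \<times> 'e) set \<Rightarrow> 'e" where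
  "lunitB E n c = act E n (fst (fst (trep c))) (snd (trep c))"

definition runitB :: "('e, 'k, 'x) pbun \<Rightarrow> nat \<Rightarrow> ('e \<times> ('k \<times> 'x)) set \<Rightarrow> 'e" where
  "runitB E n c = act E n (fst (snd (trep c))) (fst (trep c))"

definition phi :: "'k sgrp \<Rightarrow> nat \<Rightarrow> (('k \<times> 'x) \<times> ('k \<times> 'x)) set \<Rightarrow> 'k \<times> 'x" where
  "phi K n c = (gmul K n (fst (fst (trep c))) (fst (snd (trep c))), snd (fst (trep c)))"

end

theory Submission
  imports Defs
begin

text \<open>
  The twisted product K \<times>_\<eta> X is a simplicial set exactly when \<eta> satisfies May's identities
  for a twisting function. Because K is abelian these identities survive the levelwise product
  (the face d_0 is handled by the interchange law (ab)(cd) = (ac)(bd)), and the constant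
  function 1 satisfies them.

  Every class of (K \<times>_\<eta> X) \<otimes>_K (K \<times>_\<xi> X) is represented by pairs ((g, x), (h, x)), and two
  such pairs are identified by (ke, f) \<sim> (e, kf) precisely when the products gh agree. Hence
  [(g, x), (h, x)] \<mapsto> (gh, x) is a well-defined bijection onto K \<times>_(\<eta>\<xi>) X commuting with faces,
  degeneracies, action and projection. Pulling the principal bundle structure of K \<times>_(\<eta>\<xi>) X back
  along it shows that the tensor product is a principal bundle and the map an isomorphism. On
  representatives the coherence conditions become associativity and commutativity in K_n.
\<close>

section \<open>Simplicial abelian groups and simplicial sets\<close>

lemma lev_simps [simp]:
  "carrier (lev K n) = cells K n" "mult (lev K n) = gmul K n" "one (lev K n) = gone K n"
  by (simp_all add: lev_def)

context
  fixes K :: "'k sgrp"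
  assumes K: "is_sab_group K"
begin

lemma sab_sset: "is_sset K"
  using K by (simp add: is_sab_group_def)

interpretation lev: comm_group "lev K n" for n
  using K by (simp add: is_sab_group_def)

lemma gmul_closed [simp]: "a \<in> cells K n \<Longrightarrow> b \<in> cells K n \<Longrightarrow> gmul K n a b \<in> cells K n"
  using lev.m_closed by simp

lemma gone_closed [simp]: "gone K n \<in> cells K n"
  using lev.one_closed by simp

lemma gmul_assoc:
  "a \<in> cells K n \<Longrightarrow> b \<in> cells K n \<Longrightarrow> c \<in> cells K n \<Longrightarrow>
   gmul K n (gmul K n a b) c = gmul K n a (gmul K n b c)"
  using lev.m_assoc by simp

lemma gmul_comm: "a \<in> cells K n \<Longrightarrow> b \<in> cells K n \<Longrightarrow> gmul K n a b = gmul K n b a"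
  using lev.m_comm by simp

lemma gmul_left_commute:
  "a \<in> cells K n \<Longrightarrow> b \<in> cells K n \<Longrightarrow> c \<in> cells K n \<Longrightarrow>
   gmul K n a (gmul K n b c) = gmul K n b (gmul K n a c)"
  using lev.m_lcomm by simp

lemma gmul_balanced:
  "k \<in> cells K n \<Longrightarrow> g \<in> cells K n \<Longrightarrow> h \<in> cells K n \<Longrightarrow>
   gmul K n (gmul K n k g) h = gmul K n g (gmul K n k h)"
  by (simp add: gmul_assoc gmul_left_commute[where a = k and b = g])

lemma gmul_interchange:
  "a \<in> cells K n \<Longrightarrow> b \<in> cells K n \<Longrightarrow> c \<in> cells K n \<Longrightarrow> d \<in> cells K n \<Longrightarrow>
   gmul K n (gmul K n a b) (gmul K n c d) = gmul K n (gmul K n a c) (gmul K n b d)"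
  by (simp add: gmul_assoc gmul_left_commute[where a = b and b = c])

lemma gmul_one_left [simp]: "a \<in> cells K n \<Longrightarrow> gmul K n (gone K n) a = a"
  using lev.l_one by simp

lemma gmul_one_right [simp]: "a \<in> cells K n \<Longrightarrow> gmul K n a (gone K n) = a"
  using lev.r_one by simp

lemma gmul_left_cancel:
  "a \<in> cells K n \<Longrightarrow> b \<in> cells K n \<Longrightarrow> c \<in> cells K n \<Longrightarrow>
   gmul K n a b = gmul K n a c \<longleftrightarrow> b = c"
  using lev.Units_l_cancel by (simp add: lev.Units_eq)

lemma gmul_fixes_iff: "a \<in> cells K n \<Longrightarrow> k \<in> cells K n \<Longrightarrow> gmul K n k a = a \<longleftrightarrow> k = gone K n"
  using lev.r_cancel_one by simp

lemma gmul_solve_left: "a \<in> cells K n \<Longrightarrow> b \<in> cells K n \<Longrightarrow> \<exists>k \<in> cells K n. b = gmul K n k a"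
proof -
  assume a: "a \<in> cells K n" and b: "b \<in> cells K n"
  have "b = gmul K n (gmul K n b (inv\<^bsub>lev K n\<^esub> a)) a"
    using a b lev.inv_closed lev.l_inv by (simp add: gmul_assoc)
  moreover have "gmul K n b (inv\<^bsub>lev K n\<^esub> a) \<in> cells K n"
    using a b lev.inv_closed by simp
  ultimately show ?thesis by blast
qed

lemma face_gmul:
  "1 \<le> n \<Longrightarrow> i \<le> n \<Longrightarrow> a \<in> cells K n \<Longrightarrow> b \<in> cells K n \<Longrightarrow>
   face K n i (gmul K n a b) = gmul K (n - 1) (face K n i a) (face K n i b)"
  using K hom_mult[of "face K n i" "lev K n" "lev K (n - 1)" a b] by (simp add: is_sab_group_def)

lemma degen_gmul:
  "i \<le> n \<Longrightarrow> a \<in> cells K n \<Longrightarrow> b \<in> cells K n \<Longrightarrow>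
   degen K n i (gmul K n a b) = gmul K (Suc n) (degen K n i a) (degen K n i b)"
  using K hom_mult[of "degen K n i" "lev K n" "lev K (Suc n)" a b] by (simp add: is_sab_group_def)

lemma face_gone: "1 \<le> n \<Longrightarrow> i \<le> n \<Longrightarrow> face K n i (gone K n) = gone K (n - 1)"
  using K group_hom.hom_one[of "lev K n" "lev K (n - 1)" "face K n i"]
  by (simp add: is_sab_group_def group_hom_def group_hom_axioms_def lev.is_group)

lemma degen_gone: "i \<le> n \<Longrightarrow> degen K n i (gone K n) = gone K (Suc n)"
  using K group_hom.hom_one[of "lev K n" "lev K (Suc n)" "degen K n i"]
  by (simp add: is_sab_group_def group_hom_def group_hom_axioms_def lev.is_group)

end

text \<open>Stated at successor levels, where the truncated subtraction n - 1 of the definitions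
  disappears.\<close>

context
  fixes S :: "('a, 'b) sset_scheme"
  assumes S: "is_sset S"
begin

lemma sset_face_closed: "i \<le> Suc n \<Longrightarrow> x \<in> cells S (Suc n) \<Longrightarrow> face S (Suc n) i x \<in> cells S n"
  using S[unfolded is_sset_def, THEN conjunct1, rule_format, where n = "Suc n"] by simp

lemma sset_degen_closed: "i \<le> n \<Longrightarrow> x \<in> cells S n \<Longrightarrow> degen S n i x \<in> cells S (Suc n)"
  using S[unfolded is_sset_def, THEN conjunct2, THEN conjunct1, rule_format] by simp

lemma sset_face_face:
  "i < j \<Longrightarrow> j \<le> Suc (Suc n) \<Longrightarrow> x \<in> cells S (Suc (Suc n)) \<Longrightarrow>
   face S (Suc n) i (face S (Suc (Suc n)) j x) = face S (Suc n) (j - 1) (face S (Suc (Suc n)) i x)"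
  using S[unfolded is_sset_def, THEN conjunct2, THEN conjunct2, THEN conjunct1, rule_format, where n = "Suc (Suc n)"] by simp

lemma sset_face_degen_less:
  "i < j \<Longrightarrow> j \<le> Suc n \<Longrightarrow> x \<in> cells S (Suc n) \<Longrightarrow>
   face S (Suc (Suc n)) i (degen S (Suc n) j x) = degen S n (j - 1) (face S (Suc n) i x)"
  using S[unfolded is_sset_def, THEN conjunct2, THEN conjunct2, THEN conjunct2, THEN conjunct1,
      rule_format, where n = "Suc n"] by simp

lemma sset_face_degen_same:
  "j \<le> n \<Longrightarrow> x \<in> cells S n \<Longrightarrow> face S (Suc n) j (degen S n j x) = x"
  "j \<le> n \<Longrightarrow> x \<in> cells S n \<Longrightarrow> face S (Suc n) (Suc j) (degen S n j x) = x"
  using S[unfolded is_sset_def, THEN conjunct2, THEN conjunct2, THEN conjunct2, THEN conjunct2,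
      THEN conjunct1, rule_format] by simp_all

lemma sset_face_degen_greater:
  "Suc j < i \<Longrightarrow> i \<le> Suc (Suc n) \<Longrightarrow> x \<in> cells S (Suc n) \<Longrightarrow>
   face S (Suc (Suc n)) i (degen S (Suc n) j x) = degen S n j (face S (Suc n) (i - 1) x)"
  using S[unfolded is_sset_def, THEN conjunct2, THEN conjunct2, THEN conjunct2, THEN conjunct2,
      THEN conjunct2, THEN conjunct1, rule_format, where n = "Suc n"] by simp

lemma sset_degen_degen:
  "i \<le> j \<Longrightarrow> j \<le> n \<Longrightarrow> x \<in> cells S n \<Longrightarrow>
   degen S (Suc n) i (degen S n j x) = degen S (Suc n) (Suc j) (degen S n i x)"
  using S[unfolded is_sset_def, THEN conjunct2, THEN conjunct2, THEN conjunct2, THEN conjunct2,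
      THEN conjunct2, THEN conjunct2, rule_format] by simp

end

context
  fixes S :: "('a, 'c) sset_scheme" and T :: "('b, 'd) sset_scheme" and f :: "nat \<Rightarrow> 'a \<Rightarrow> 'b"
  assumes f: "smap S T f"
begin

lemma smap_closed: "x \<in> cells S n \<Longrightarrow> f n x \<in> cells T n"
  using f by (simp add: smap_def)

lemma smap_face:
  "i \<le> Suc n \<Longrightarrow> x \<in> cells S (Suc n) \<Longrightarrow> f n (face S (Suc n) i x) = face T (Suc n) i (f (Suc n) x)"
  using f[unfolded smap_def, THEN conjunct2, THEN conjunct1, rule_format, where n = "Suc n"] by simp

lemma smap_degen: "i \<le> n \<Longrightarrow> x \<in> cells S n \<Longrightarrow> f (Suc n) (degen S n i x) = degen T n i (f n x)"
  using f by (simp add: smap_def)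

end

lemma smapI:
  assumes "\<And>n x. x \<in> cells S n \<Longrightarrow> f n x \<in> cells T n"
    and "\<And>n i x. i \<le> Suc n \<Longrightarrow> x \<in> cells S (Suc n) \<Longrightarrow>
           f n (face S (Suc n) i x) = face T (Suc n) i (f (Suc n) x)"
    and "\<And>n i x. i \<le> n \<Longrightarrow> x \<in> cells S n \<Longrightarrow> f (Suc n) (degen S n i x) = degen T n i (f n x)"
  shows "smap S T f"
  unfolding smap_def
proof (intro conjI allI impI)
  fix n i x assume "1 \<le> n \<and> i \<le> n \<and> x \<in> cells S n"
  then show "f (n - 1) (face S n i x) = face T n i (f n x)"
    using assms(2)[of i "n - 1" x] by simp
qed (simp_all add: assms)

lemma is_ssetI:
  assumes face_closed: "\<And>n i x. i \<le> Suc n \<Longrightarrow> x \<in> cells S (Suc n) \<Longrightarrow> face S (Suc n) i x \<in> cells S n"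
    and degen_closed: "\<And>n i x. i \<le> n \<Longrightarrow> x \<in> cells S n \<Longrightarrow> degen S n i x \<in> cells S (Suc n)"
    and face_face: "\<And>n i j x. i < j \<Longrightarrow> j \<le> Suc (Suc n) \<Longrightarrow> x \<in> cells S (Suc (Suc n)) \<Longrightarrow>
      face S (Suc n) i (face S (Suc (Suc n)) j x) = face S (Suc n) (j - 1) (face S (Suc (Suc n)) i x)"
    and face_degen_less: "\<And>n i j x. i < j \<Longrightarrow> j \<le> Suc n \<Longrightarrow> x \<in> cells S (Suc n) \<Longrightarrow>
      face S (Suc (Suc n)) i (degen S (Suc n) j x) = degen S n (j - 1) (face S (Suc n) i x)"
    and face_degen_same: "\<And>n j x. j \<le> n \<Longrightarrow> x \<in> cells S n \<Longrightarrow>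
      face S (Suc n) j (degen S n j x) = x \<and> face S (Suc n) (Suc j) (degen S n j x) = x"
    and face_degen_greater: "\<And>n i j x. Suc j < i \<Longrightarrow> i \<le> Suc (Suc n) \<Longrightarrow> x \<in> cells S (Suc n) \<Longrightarrow>
      face S (Suc (Suc n)) i (degen S (Suc n) j x) = degen S n j (face S (Suc n) (i - 1) x)"
    and degen_degen: "\<And>n i j x. i \<le> j \<Longrightarrow> j \<le> n \<Longrightarrow> x \<in> cells S n \<Longrightarrow>
      degen S (Suc n) i (degen S n j x) = degen S (Suc n) (Suc j) (degen S n i x)"
  shows "is_sset S"
  unfolding is_sset_def
proof (intro conjI allI impI)
  fix n i x assume "1 \<le> n \<and> i \<le> n \<and> x \<in> cells S n"
  then show "face S n i x \<in> cells S (n - 1)"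
    using face_closed[of i "n - 1" x] by simp
next
  fix n i j x assume "2 \<le> n \<and> i < j \<and> j \<le> n \<and> x \<in> cells S n"
  then show "face S (n - 1) i (face S n j x) = face S (n - 1) (j - 1) (face S n i x)"
    using face_face[of i j "n - 2" x] by (simp add: numeral_2_eq_2 Suc_diff_Suc)
next
  fix n i j x assume "i < j \<and> j \<le> n \<and> x \<in> cells S n"
  then show "face S (Suc n) i (degen S n j x) = degen S (n - 1) (j - 1) (face S n i x)"
    using face_degen_less[of i j "n - 1" x] by simp
next
  fix n i j x assume "Suc j < i \<and> i \<le> Suc n \<and> x \<in> cells S n"
  then show "face S (Suc n) i (degen S n j x) = degen S (n - 1) j (face S n (i - 1) x)"
    using face_degen_greater[of j i "n - 1" x] by simp
qed (use degen_closed face_degen_same degen_degen in auto)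

lemma is_sset_if_inj_smap:
  assumes T: "is_sset T" and f: "smap S T f" and inj: "\<And>n. inj_on (f n) (cells S n)"
    and face_closed: "\<And>n i x. i \<le> Suc n \<Longrightarrow> x \<in> cells S (Suc n) \<Longrightarrow> face S (Suc n) i x \<in> cells S n"
    and degen_closed: "\<And>n i x. i \<le> n \<Longrightarrow> x \<in> cells S n \<Longrightarrow> degen S n i x \<in> cells S (Suc n)"
  shows "is_sset S"
proof -
  note [simp] = face_closed degen_closed smap_closed[OF f] smap_face[OF f] smap_degen[OF f]
    sset_face_closed[OF T] sset_degen_closed[OF T]
  show ?thesis
  proof (rule is_ssetI)
    fix n i j x assume "i < j" "j \<le> Suc (Suc n)" "x \<in> cells S (Suc (Suc n))"
    then show "face S (Suc n) i (face S (Suc (Suc n)) j x) = face S (Suc n) (j - 1) (face S (Suc (Suc n)) i x)"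
      by (intro inj_onD[OF inj[of n]]) (simp_all add: sset_face_face[OF T])
  next
    fix n i j x assume "i < j" "j \<le> Suc n" "x \<in> cells S (Suc n)"
    then show "face S (Suc (Suc n)) i (degen S (Suc n) j x) = degen S n (j - 1) (face S (Suc n) i x)"
      by (intro inj_onD[OF inj[of "Suc n"]]) (simp_all add: sset_face_degen_less[OF T])
  next
    fix n j x assume "j \<le> n" "x \<in> cells S n"
    then show "face S (Suc n) j (degen S n j x) = x \<and> face S (Suc n) (Suc j) (degen S n j x) = x"
      by (intro conjI inj_onD[OF inj[of n]]) (simp_all add: sset_face_degen_same[OF T])
  next
    fix n i j x assume "Suc j < i" "i \<le> Suc (Suc n)" "x \<in> cells S (Suc n)"
    then show "face S (Suc (Suc n)) i (degen S (Suc n) j x) = degen S n j (face S (Suc n) (i - 1) x)"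
      by (intro inj_onD[OF inj[of "Suc n"]]) (simp_all add: sset_face_degen_greater[OF T])
  next
    fix n i j x assume "i \<le> j" "j \<le> n" "x \<in> cells S n"
    then show "degen S (Suc n) i (degen S n j x) = degen S (Suc n) (Suc j) (degen S n i x)"
      by (intro inj_onD[OF inj[of "Suc (Suc n)"]]) (simp_all add: sset_degen_degen[OF T])
  qed simp_all
qed

section \<open>Principal bundles\<close>

context
  fixes K :: "'k sgrp" and X :: "'x sset" and E :: "('e, 'k, 'x) pbun"
  assumes E: "is_pbun K X E"
begin

lemma pbun_sset: "is_sset (tot E)"
  using E by (simp add: is_pbun_def)

lemma pbun_proj_smap: "smap (tot E) X (proj E)"
  using E by (simp add: is_pbun_def)

lemma pbun_act_closed: "k \<in> cells K n \<Longrightarrow> e \<in> cells (tot E) n \<Longrightarrow> act E n k e \<in> cells (tot E) n"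
  using E by (simp add: is_pbun_def)

lemma pbun_act_one: "e \<in> cells (tot E) n \<Longrightarrow> act E n (gone K n) e = e"
  using E by (simp add: is_pbun_def)

lemma pbun_act_mult:
  "k \<in> cells K n \<Longrightarrow> h \<in> cells K n \<Longrightarrow> e \<in> cells (tot E) n \<Longrightarrow>
   act E n (gmul K n k h) e = act E n k (act E n h e)"
  using E by (simp add: is_pbun_def)

lemma pbun_face_act:
  "i \<le> Suc n \<Longrightarrow> k \<in> cells K (Suc n) \<Longrightarrow> e \<in> cells (tot E) (Suc n) \<Longrightarrow>
   face (tot E) (Suc n) i (act E (Suc n) k e) = act E n (face K (Suc n) i k) (face (tot E) (Suc n) i e)"
  using E[unfolded is_pbun_def, THEN conjunct2, THEN conjunct2, THEN conjunct2, THEN conjunct2,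
      THEN conjunct2, THEN conjunct1, rule_format, where n = "Suc n"] by simp

lemma pbun_degen_act:
  "i \<le> n \<Longrightarrow> k \<in> cells K n \<Longrightarrow> e \<in> cells (tot E) n \<Longrightarrow>
   degen (tot E) n i (act E n k e) = act E (Suc n) (degen K n i k) (degen (tot E) n i e)"
  using E by (simp add: is_pbun_def)

lemma pbun_act_free: "k \<in> cells K n \<Longrightarrow> e \<in> cells (tot E) n \<Longrightarrow> act E n k e = e \<Longrightarrow> k = gone K n"
  using E unfolding is_pbun_def by blast

lemma pbun_proj_image: "proj E n ` cells (tot E) n = cells X n"
  using E by (simp add: is_pbun_def)

lemma pbun_proj_eq_iff:
  "e \<in> cells (tot E) n \<Longrightarrow> e' \<in> cells (tot E) n \<Longrightarrow>
   proj E n e = proj E n e' \<longleftrightarrow> (\<exists>k \<in> cells K n. e' = act E n k e)"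
  using E by (simp add: is_pbun_def)

end

context
  fixes K :: "'k sgrp" and X :: "'x sset" and E :: "('e, 'k, 'x) pbun" and F :: "('f, 'k, 'x) pbun"
    and f :: "nat \<Rightarrow> 'e \<Rightarrow> 'f"
  assumes f: "bun_hom K X E F f"
begin

lemma bun_hom_smap: "smap (tot E) (tot F) f"
  using f by (simp add: bun_hom_def)

lemma bun_hom_act: "k \<in> cells K n \<Longrightarrow> e \<in> cells (tot E) n \<Longrightarrow> f n (act E n k e) = act F n k (f n e)"
  using f by (simp add: bun_hom_def)

lemma bun_hom_proj: "e \<in> cells (tot E) n \<Longrightarrow> proj F n (f n e) = proj E n e"
  using f by (simp add: bun_hom_def)

end

lemma bun_homI:
  assumes "smap (tot E) (tot F) f"
    and "\<And>n k e. k \<in> cells K n \<Longrightarrow> e \<in> cells (tot E) n \<Longrightarrow> f n (act E n k e) = act F n k (f n e)"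
    and "\<And>n e. e \<in> cells (tot E) n \<Longrightarrow> proj F n (f n e) = proj E n e"
  shows "bun_hom K X E F f"
  using assms by (simp add: bun_hom_def)

text \<open>A tensor product is not known a priori to be a principal bundle; its structure is pulled
  back along a bijective bundle map into one.\<close>

lemma is_pbun_if_bij_bun_hom:
  assumes K: "is_sab_group K" and E: "is_pbun K X E" and f: "bun_hom K X F E f"
    and bij: "\<And>n. bij_betw (f n) (cells (tot F) n) (cells (tot E) n)"
    and face_closed: "\<And>n i c. i \<le> Suc n \<Longrightarrow> c \<in> cells (tot F) (Suc n) \<Longrightarrow>
      face (tot F) (Suc n) i c \<in> cells (tot F) n"
    and degen_closed: "\<And>n i c. i \<le> n \<Longrightarrow> c \<in> cells (tot F) n \<Longrightarrow>
      degen (tot F) n i c \<in> cells (tot F) (Suc n)"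
    and act_closed: "\<And>n k c. k \<in> cells K n \<Longrightarrow> c \<in> cells (tot F) n \<Longrightarrow> act F n k c \<in> cells (tot F) n"
  shows "is_pbun K X F"
proof -
  have inj: "inj_on (f n) (cells (tot F) n)" for n
    using bij bij_betw_imp_inj_on by blast
  note f_simps = face_closed degen_closed act_closed smap_closed[OF bun_hom_smap[OF f]]
    smap_face[OF bun_hom_smap[OF f]] smap_degen[OF bun_hom_smap[OF f]] bun_hom_act[OF f]
    pbun_act_closed[OF E] sset_face_closed[OF pbun_sset[OF E]] sset_degen_closed[OF pbun_sset[OF E]]
    sset_face_closed[OF sab_sset[OF K]] sset_degen_closed[OF sab_sset[OF K]]
  have proj_F: "proj F n c = proj E n (f n c)" if "c \<in> cells (tot F) n" for n c
    using bun_hom_proj[OF f that] by simp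
  have sset_F: "is_sset (tot F)"
    using is_sset_if_inj_smap[OF pbun_sset[OF E] bun_hom_smap[OF f] inj face_closed degen_closed] .
  have smap_proj_F: "smap (tot F) X (proj F)"
    using pbun_proj_smap[OF E] by (intro smapI) (simp_all add: f_simps proj_F smap_closed smap_face smap_degen)
  have proj_image_F: "proj F n ` cells (tot F) n = cells X n" for n
  proof -
    have "proj F n ` cells (tot F) n = proj E n ` f n ` cells (tot F) n"
      by (simp add: image_image proj_F cong: image_cong)
    also have "\<dots> = cells X n"
      using bij_betw_imp_surj_on[OF bij] pbun_proj_image[OF E] by simp
    finally show ?thesis .
  qed
  have proj_eq_iff_F: "proj F n c = proj F n c' \<longleftrightarrow> (\<exists>k \<in> cells K n. c' = act F n k c)"
    if "c \<in> cells (tot F) n" "c' \<in> cells (tot F) n" for n c c'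
  proof -
    have "proj F n c = proj F n c' \<longleftrightarrow> (\<exists>k \<in> cells K n. f n c' = act E n k (f n c))"
      using that pbun_proj_eq_iff[OF E, of "f n c" n "f n c'"] by (simp add: f_simps proj_F)
    also have "\<dots> \<longleftrightarrow> (\<exists>k \<in> cells K n. c' = act F n k c)"
    proof (rule bex_cong[OF refl])
      fix k assume "k \<in> cells K n"
      then show "f n c' = act E n k (f n c) \<longleftrightarrow> c' = act F n k c"
        using that by (simp add: bun_hom_act[OF f, symmetric] inj_on_eq_iff[OF inj] act_closed)
    qed
    finally show ?thesis .
  qed
  show ?thesis
    unfolding is_pbun_def
  proof (intro conjI allI impI sset_F smap_proj_F proj_image_F)
    fix n c assume "c \<in> cells (tot F) n"
    then show "act F n (gone K n) c = c"
      using K by (intro inj_onD[OF inj[of n]]) (simp_all add: f_simps pbun_act_one[OF E])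
  next
    fix n k h c assume "k \<in> cells K n \<and> h \<in> cells K n \<and> c \<in> cells (tot F) n"
    then show "act F n (gmul K n k h) c = act F n k (act F n h c)"
      using K by (intro inj_onD[OF inj[of n]]) (simp_all add: f_simps pbun_act_mult[OF E])
  next
    fix n i k c assume asm: "1 \<le> n \<and> i \<le> n \<and> k \<in> cells K n \<and> c \<in> cells (tot F) n"
    then obtain m where n: "n = Suc m" by (cases n) auto
    have "face (tot F) (Suc m) i (act F (Suc m) k c) = act F m (face K (Suc m) i k) (face (tot F) (Suc m) i c)"
      using asm K n by (intro inj_onD[OF inj[of m]]) (simp_all add: f_simps pbun_face_act[OF E])
    then show "face (tot F) n i (act F n k c) = act F (n - 1) (face K n i k) (face (tot F) n i c)"
      using n by simp
  next
    fix n i k c assume "i \<le> n \<and> k \<in> cells K n \<and> c \<in> cells (tot F) n"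
    then show "degen (tot F) n i (act F n k c) = act F (Suc n) (degen K n i k) (degen (tot F) n i c)"
      using K by (intro inj_onD[OF inj[of "Suc n"]]) (simp_all add: f_simps pbun_degen_act[OF E])
  next
    fix n k c assume asm: "k \<in> cells K n \<and> c \<in> cells (tot F) n \<and> act F n k c = c"
    then have "act E n k (f n c) = f n c"
      using bun_hom_act[OF f, of k n c] by simp
    then show "k = gone K n"
      using asm by (intro pbun_act_free[OF E]) (simp_all add: f_simps)
  qed (use act_closed proj_eq_iff_F in auto)
qed

lemma bun_iso_if_bij:
  assumes F: "is_pbun K X F" and E: "is_pbun K X E" and f: "bun_hom K X F E f"
    and bij: "\<And>n. bij_betw (f n) (cells (tot F) n) (cells (tot E) n)"
  shows "bun_iso K X F E f"
proof -
  define g where "g n = the_inv_into (cells (tot F) n) (f n)" for n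
  have g_closed: "g n y \<in> cells (tot F) n" if "y \<in> cells (tot E) n" for n y
    using bij_betw_apply[OF bij_betw_the_inv_into[OF bij] that] by (simp add: g_def)
  have g_f: "g n (f n c) = c" if "c \<in> cells (tot F) n" for n c
    using the_inv_into_f_f[OF bij_betw_imp_inj_on[OF bij] that] by (simp add: g_def)
  have f_g: "f n (g n y) = y" if "y \<in> cells (tot E) n" for n y
    using f_the_inv_into_f_bij_betw[OF bij that] by (simp add: g_def)
  have g_eqI: "g n y = c" if "c \<in> cells (tot F) n" "y = f n c" for n y c
    using g_f that by simp
  note f_simps = smap_face[OF bun_hom_smap[OF f]] smap_degen[OF bun_hom_smap[OF f]] bun_hom_act[OF f]
    sset_face_closed[OF pbun_sset[OF F]] sset_degen_closed[OF pbun_sset[OF F]] pbun_act_closed[OF F]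
  have "bun_hom K X E F g"
  proof (intro bun_homI smapI g_closed)
    fix n i y assume "i \<le> Suc n" "y \<in> cells (tot E) (Suc n)"
    then show "g n (face (tot E) (Suc n) i y) = face (tot F) (Suc n) i (g (Suc n) y)"
      by (intro g_eqI) (simp_all add: f_simps g_closed f_g)
  next
    fix n i y assume "i \<le> n" "y \<in> cells (tot E) n"
    then show "g (Suc n) (degen (tot E) n i y) = degen (tot F) n i (g n y)"
      by (intro g_eqI) (simp_all add: f_simps g_closed f_g)
  next
    fix n k y assume "k \<in> cells K n" "y \<in> cells (tot E) n"
    then show "g n (act E n k y) = act F n k (g n y)"
      by (intro g_eqI) (simp_all add: f_simps g_closed f_g)
  next
    fix n y assume "y \<in> cells (tot E) n"
    then show "proj F n (g n y) = proj E n y"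
      using bun_hom_proj[OF f g_closed] f_g by metis
  qed
  then show ?thesis
    unfolding bun_iso_def using F E f g_f f_g by blast
qed

lemma bun_iso_if_bij_bun_hom:
  assumes "is_sab_group K" and E: "is_pbun K X E" and f: "bun_hom K X F E f"
    and bij: "\<And>n. bij_betw (f n) (cells (tot F) n) (cells (tot E) n)"
    and "\<And>n i c. i \<le> Suc n \<Longrightarrow> c \<in> cells (tot F) (Suc n) \<Longrightarrow>
      face (tot F) (Suc n) i c \<in> cells (tot F) n"
    and "\<And>n i c. i \<le> n \<Longrightarrow> c \<in> cells (tot F) n \<Longrightarrow>
      degen (tot F) n i c \<in> cells (tot F) (Suc n)"
    and "\<And>n k c. k \<in> cells K n \<Longrightarrow> c \<in> cells (tot F) n \<Longrightarrow> act F n k c \<in> cells (tot F) n"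
  shows "bun_iso K X F E f"
  using bun_iso_if_bij[OF is_pbun_if_bij_bun_hom[OF assms] E f bij] .

section \<open>Twisting functions and twisted products\<close>

lemma tw_sset_simps [simp]:
  "cells (tw_sset K X \<eta>) n = cells K n \<times> cells X n"
  "face (tw_sset K X \<eta>) n 0 (g, x) = (gmul K (n - 1) (face K n 0 g) (\<eta> n x), face X n 0 x)"
  "i \<noteq> 0 \<Longrightarrow> face (tw_sset K X \<eta>) n i (g, x) = (face K n i g, face X n i x)"
  "degen (tw_sset K X \<eta>) n i (g, x) = (degen K n i g, degen X n i x)"
  by (simp_all add: tw_sset_def)

text \<open>May's identities d_0 \<eta>(x) = \<eta>(d_1 x) \<eta>(d_0 x)^-1, d_i \<eta>(x) = \<eta>(d_(i+1) x) for i > 0,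
  s_i \<eta>(x) = \<eta>(s_(i+1) x) and \<eta>(s_0 x) = 1, with every level written as a successor.\<close>

locale twisting_function =
  fixes K :: "'k sgrp" and X :: "'x sset" and \<eta> :: "nat \<Rightarrow> 'x \<Rightarrow> 'k"
  assumes closed: "x \<in> cells X (Suc n) \<Longrightarrow> \<eta> (Suc n) x \<in> cells K n"
    and face_ge_2: "2 \<le> j \<Longrightarrow> j \<le> Suc (Suc n) \<Longrightarrow> x \<in> cells X (Suc (Suc n)) \<Longrightarrow>
      \<eta> (Suc n) (face X (Suc (Suc n)) j x) = face K (Suc n) (j - 1) (\<eta> (Suc (Suc n)) x)"
    and face_1: "x \<in> cells X (Suc (Suc n)) \<Longrightarrow>
      \<eta> (Suc n) (face X (Suc (Suc n)) 1 x) =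
        gmul K n (face K (Suc n) 0 (\<eta> (Suc (Suc n)) x)) (\<eta> (Suc n) (face X (Suc (Suc n)) 0 x))"
    and degen_ge_1: "1 \<le> j \<Longrightarrow> j \<le> Suc n \<Longrightarrow> x \<in> cells X (Suc n) \<Longrightarrow>
      \<eta> (Suc (Suc n)) (degen X (Suc n) j x) = degen K n (j - 1) (\<eta> (Suc n) x)"
    and degen_0: "x \<in> cells X n \<Longrightarrow> \<eta> (Suc n) (degen X n 0 x) = gone K n"

context twisting_function
begin

lemma is_sset_tw_sset:
  assumes K: "is_sab_group K" and X: "is_sset X"
  shows "is_sset (tw_sset K X \<eta>)"
proof -
  note [simp] = sset_face_closed[OF sab_sset[OF K]] sset_degen_closed[OF sab_sset[OF K]]
    sset_face_closed[OF X] sset_degen_closed[OF X] gmul_closed[OF K] closed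
    face_gmul[OF K] degen_gmul[OF K] gmul_one_right[OF K]
  show ?thesis
  proof (rule is_ssetI, safe)
    fix n i g x assume "i \<le> Suc n" "(g, x) \<in> cells (tw_sset K X \<eta>) (Suc n)"
    then show "face (tw_sset K X \<eta>) (Suc n) i (g, x) \<in> cells (tw_sset K X \<eta>) n"
      by (cases "i = 0") simp_all
  next
    fix n i j g x assume ij: "i < j" "j \<le> Suc (Suc n)" and "(g, x) \<in> cells (tw_sset K X \<eta>) (Suc (Suc n))"
    then have gx: "g \<in> cells K (Suc (Suc n))" "x \<in> cells X (Suc (Suc n))" by simp_all
    show "face (tw_sset K X \<eta>) (Suc n) i (face (tw_sset K X \<eta>) (Suc (Suc n)) j (g, x)) =
          face (tw_sset K X \<eta>) (Suc n) (j - 1) (face (tw_sset K X \<eta>) (Suc (Suc n)) i (g, x))"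
    proof (cases "i = 0")
      case False
      then show ?thesis
        using ij gx by (simp add: sset_face_face[OF sab_sset[OF K]] sset_face_face[OF X])
    next
      case i: True
      show ?thesis
      proof (cases "j = 1")
        case True
        then show ?thesis
          using i gx face_1[OF gx(2)] sset_face_face[OF sab_sset[OF K], of 0 1 n g]
            sset_face_face[OF X, of 0 1 n x]
          by (simp add: gmul_assoc[OF K])
      next
        case False
        then show ?thesis
          using i ij gx sset_face_face[OF sab_sset[OF K], of 0 j n g] sset_face_face[OF X, of 0 j n x]
          by (simp add: face_ge_2)
      qed
    qed
  next
    fix n i j g x assume ij: "i < j" "j \<le> Suc n" and "(g, x) \<in> cells (tw_sset K X \<eta>) (Suc n)"
    then have gx: "g \<in> cells K (Suc n)" "x \<in> cells X (Suc n)" by simp_all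
    show "face (tw_sset K X \<eta>) (Suc (Suc n)) i (degen (tw_sset K X \<eta>) (Suc n) j (g, x)) =
          degen (tw_sset K X \<eta>) n (j - 1) (face (tw_sset K X \<eta>) (Suc n) i (g, x))"
      using ij gx sset_face_degen_less[OF sab_sset[OF K], of i j n g] sset_face_degen_less[OF X, of i j n x]
      by (cases "i = 0") (simp_all add: degen_ge_1)
  next
    fix n j g x assume j: "j \<le> n" and "(g, x) \<in> cells (tw_sset K X \<eta>) n"
    then have gx: "g \<in> cells K n" "x \<in> cells X n" by simp_all
    show "face (tw_sset K X \<eta>) (Suc n) j (degen (tw_sset K X \<eta>) n j (g, x)) = (g, x)"
      using j gx by (cases "j = 0")
        (simp_all add: sset_face_degen_same[OF sab_sset[OF K]] sset_face_degen_same[OF X] degen_0)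
    show "face (tw_sset K X \<eta>) (Suc n) (Suc j) (degen (tw_sset K X \<eta>) n j (g, x)) = (g, x)"
      using j gx by (simp add: sset_face_degen_same[OF sab_sset[OF K]] sset_face_degen_same[OF X])
  next
    fix n i j g x assume "Suc j < i" "i \<le> Suc (Suc n)" "(g, x) \<in> cells (tw_sset K X \<eta>) (Suc n)"
    then show "face (tw_sset K X \<eta>) (Suc (Suc n)) i (degen (tw_sset K X \<eta>) (Suc n) j (g, x)) =
          degen (tw_sset K X \<eta>) n j (face (tw_sset K X \<eta>) (Suc n) (i - 1) (g, x))"
      by (simp add: sset_face_degen_greater[OF sab_sset[OF K]] sset_face_degen_greater[OF X])
  next
    fix n i j g x assume "i \<le> j" "j \<le> n" "(g, x) \<in> cells (tw_sset K X \<eta>) n"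
    then show "degen (tw_sset K X \<eta>) (Suc n) i (degen (tw_sset K X \<eta>) n j (g, x)) =
          degen (tw_sset K X \<eta>) (Suc n) (Suc j) (degen (tw_sset K X \<eta>) n i (g, x))"
      by (simp add: sset_degen_degen[OF sab_sset[OF K]] sset_degen_degen[OF X])
  qed simp
qed


end

text \<open>Each identity is a simplicial identity of K \<times>_\<eta> X evaluated at a cell (1, x).\<close>

lemma twisting_function_if_is_twisting:
  assumes K: "is_sab_group K" and X: "is_sset X" and \<eta>: "is_twisting K X \<eta>"
  shows "twisting_function K X \<eta>"
proof
  have S: "is_sset (tw_sset K X \<eta>)"
    using \<eta> by (simp add: is_twisting_def)
  have closed: "\<eta> (Suc n) x \<in> cells K n" if "x \<in> cells X (Suc n)" for n x
    using \<eta>[unfolded is_twisting_def, THEN conjunct1, rule_format, where n = "Suc n"] that by simp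
  note simps = gmul_one_left[OF K] gmul_one_right[OF K] face_gone[OF K] degen_gone[OF K] closed
    sset_face_closed[OF X] sset_degen_closed[OF X]
  show "\<eta> (Suc n) x \<in> cells K n" if "x \<in> cells X (Suc n)" for n x
    using closed that .
  show "\<eta> (Suc n) (face X (Suc (Suc n)) j x) = face K (Suc n) (j - 1) (\<eta> (Suc (Suc n)) x)"
    if "2 \<le> j" "j \<le> Suc (Suc n)" "x \<in> cells X (Suc (Suc n))" for n j x
    using that sset_face_face[OF S, of 0 j n "(gone K (Suc (Suc n)), x)"] K by (simp add: simps)
  show "\<eta> (Suc n) (face X (Suc (Suc n)) 1 x) =
      gmul K n (face K (Suc n) 0 (\<eta> (Suc (Suc n)) x)) (\<eta> (Suc n) (face X (Suc (Suc n)) 0 x))"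
    if "x \<in> cells X (Suc (Suc n))" for n x
    using that sset_face_face[OF S, of 0 1 n "(gone K (Suc (Suc n)), x)"] K
    by (simp add: simps face_gmul[OF K])
  show "\<eta> (Suc (Suc n)) (degen X (Suc n) j x) = degen K n (j - 1) (\<eta> (Suc n) x)"
    if "1 \<le> j" "j \<le> Suc n" "x \<in> cells X (Suc n)" for n j x
    using that sset_face_degen_less[OF S, of 0 j n "(gone K (Suc n), x)"] K by (simp add: simps)
  show "\<eta> (Suc n) (degen X n 0 x) = gone K n" if "x \<in> cells X n" for n x
    using that sset_face_degen_same(1)[OF S, of 0 n "(gone K n, x)"] K by (simp add: simps)
qed

lemma is_twisting_iff_twisting_function:
  assumes "is_sab_group K" and "is_sset X"
  shows "is_twisting K X \<eta> \<longleftrightarrow> twisting_function K X \<eta>"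
proof
  show "twisting_function K X \<eta>" if "is_twisting K X \<eta>"
    using twisting_function_if_is_twisting[OF assms that] .
  show "is_twisting K X \<eta>" if \<eta>: "twisting_function K X \<eta>"
    unfolding is_twisting_def
  proof (intro conjI allI impI twisting_function.is_sset_tw_sset[OF \<eta> assms])
    fix n x assume "1 \<le> n \<and> x \<in> cells X n"
    then show "\<eta> n x \<in> cells K (n - 1)"
      using twisting_function.closed[OF \<eta>, of x "n - 1"] by simp
  qed
qed

lemma twisting_function_tw_one:
  assumes K: "is_sab_group K"
  shows "twisting_function K X (tw_one K)"
  by unfold_locales (simp_all add: tw_one_def K face_gone degen_gone)

lemma twisting_function_tw_mult:
  assumes K: "is_sab_group K" and X: "is_sset X"
    and \<eta>: "twisting_function K X \<eta>" and \<xi>: "twisting_function K X \<xi>"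
  shows "twisting_function K X (tw_mult K \<eta> \<xi>)"
proof -
  interpret \<eta>: twisting_function K X \<eta> by (rule \<eta>)
  interpret \<xi>: twisting_function K X \<xi> by (rule \<xi>)
  note simps = tw_mult_def \<eta>.closed \<xi>.closed K face_gmul degen_gmul
    sset_face_closed[OF sab_sset[OF K]] sset_face_closed[OF X]
  show ?thesis
  proof
    fix n x assume x: "x \<in> cells X (Suc (Suc n))"
    then show "tw_mult K \<eta> \<xi> (Suc n) (face X (Suc (Suc n)) 1 x) =
      gmul K n (face K (Suc n) 0 (tw_mult K \<eta> \<xi> (Suc (Suc n)) x))
        (tw_mult K \<eta> \<xi> (Suc n) (face X (Suc (Suc n)) 0 x))"
      using gmul_interchange[OF K, of "face K (Suc n) 0 (\<eta> (Suc (Suc n)) x)" n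
          "\<eta> (Suc n) (face X (Suc (Suc n)) 0 x)" "face K (Suc n) 0 (\<xi> (Suc (Suc n)) x)"
          "\<xi> (Suc n) (face X (Suc (Suc n)) 0 x)"] \<eta>.face_1[OF x] \<xi>.face_1[OF x]
      by (simp add: simps)
  qed (simp_all add: simps \<eta>.face_ge_2 \<xi>.face_ge_2 \<eta>.degen_ge_1 \<xi>.degen_ge_1 \<eta>.degen_0 \<xi>.degen_0)
qed

lemma is_twisting_tw_one:
  assumes "is_sab_group K" and "is_sset X"
  shows "is_twisting K X (tw_one K)"
  using twisting_function_tw_one[OF assms(1)] by (simp add: is_twisting_iff_twisting_function[OF assms])

lemma is_twisting_tw_mult:
  assumes "is_sab_group K" and "is_sset X" and "is_twisting K X \<eta>" and "is_twisting K X \<xi>"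
  shows "is_twisting K X (tw_mult K \<eta> \<xi>)"
  using assms twisting_function_tw_mult[OF assms(1,2)] by (simp add: is_twisting_iff_twisting_function)

lemma tw_bun_simps [simp]:
  "tot (tw_bun K X \<eta>) = tw_sset K X \<eta>"
  "act (tw_bun K X \<eta>) n k (g, x) = (gmul K n k g, x)"
  "proj (tw_bun K X \<eta>) n = snd"
  by (simp_all add: tw_bun_def)

lemma is_pbun_tw_bun:
  assumes K: "is_sab_group K" and X: "is_sset X" and \<eta>: "is_twisting K X \<eta>"
  shows "is_pbun K X (tw_bun K X \<eta>)"
proof -
  have cells_\<eta>: "\<eta> (Suc n) x \<in> cells K n" if "x \<in> cells X (Suc n)" for n x
    using twisting_function.closed[OF twisting_function_if_is_twisting[OF K X \<eta>] that] .
  note simps = K gmul_assoc face_gmul degen_gmul sset_face_closed[OF sab_sset[OF K]]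
  have smap_snd: "smap (tw_sset K X \<eta>) X (\<lambda>n. snd)"
  proof (intro smapI)
    fix n i z assume "i \<le> Suc n"
    then show "snd (face (tw_sset K X \<eta>) (Suc n) i z) = face X (Suc n) i (snd z)"
      by (cases z, cases "i = 0") simp_all
  qed auto
  show ?thesis
    unfolding is_pbun_def tw_bun_simps
  proof (intro conjI allI impI smap_snd)
    show "is_sset (tw_sset K X \<eta>)"
      using \<eta> by (simp add: is_twisting_def)
  next
    fix n i k e assume asm: "1 \<le> n \<and> i \<le> n \<and> k \<in> cells K n \<and> e \<in> cells (tw_sset K X \<eta>) n"
    then obtain m g x where n: "n = Suc m" and e: "e = (g, x)" by (cases n, auto)
    show "face (tw_sset K X \<eta>) n i (act (tw_bun K X \<eta>) n k e) =
          act (tw_bun K X \<eta>) (n - 1) (face K n i k) (face (tw_sset K X \<eta>) n i e)"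
      using asm cells_\<eta> by (cases "i = 0") (simp_all add: n e simps)
  next
    fix n k e assume "k \<in> cells K n \<and> e \<in> cells (tw_sset K X \<eta>) n \<and> act (tw_bun K X \<eta>) n k e = e"
    then show "k = gone K n"
      using gmul_fixes_iff[OF K] by (cases e) auto
  next
    fix n show "snd ` cells (tw_sset K X \<eta>) n = cells X n"
      using gone_closed[OF K] by force
  next
    fix n e e' assume "e \<in> cells (tw_sset K X \<eta>) n \<and> e' \<in> cells (tw_sset K X \<eta>) n"
    then show "snd e = snd e' \<longleftrightarrow> (\<exists>k \<in> cells K n. e' = act (tw_bun K X \<eta>) n k e)"
      using gmul_solve_left[OF K] by (cases e, cases e') auto
  qed (auto simp: simps)
qed

lemma prod_bun_simps [simp]:
  "cells (tot (prod_bun K X)) n = cells K n \<times> cells X n"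
  "face (tot (prod_bun K X)) n i (g, x) = (face K n i g, face X n i x)"
  "degen (tot (prod_bun K X)) n i (g, x) = (degen K n i g, degen X n i x)"
  "act (prod_bun K X) n k (g, x) = (gmul K n k g, x)"
  "proj (prod_bun K X) n = snd"
  by (simp_all add: prod_bun_def)

lemma bun_iso_prod_bun_tw_one:
  assumes K: "is_sab_group K" and X: "is_sset X"
  shows "bun_iso K X (prod_bun K X) (tw_bun K X (tw_one K)) (\<lambda>n z. z)"
proof (rule bun_iso_if_bij_bun_hom[OF K])
  show "is_pbun K X (tw_bun K X (tw_one K))"
    using is_pbun_tw_bun[OF K X is_twisting_tw_one[OF K X]] .
  show "bun_hom K X (prod_bun K X) (tw_bun K X (tw_one K)) (\<lambda>n z. z)"
  proof (intro bun_homI smapI)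
    fix n i z assume "i \<le> Suc n" "z \<in> cells (tot (prod_bun K X)) (Suc n)"
    then show "face (tot (prod_bun K X)) (Suc n) i z = face (tot (tw_bun K X (tw_one K))) (Suc n) i z"
      using K by (cases z, cases "i = 0") (auto simp: tw_one_def sset_face_closed[OF sab_sset[OF K]])
  qed auto
qed (auto simp: bij_betw_def K sset_face_closed[OF sab_sset[OF K]] sset_face_closed[OF X]
       sset_degen_closed[OF sab_sset[OF K]] sset_degen_closed[OF X])

section \<open>The tensor product of principal bundles\<close>

lemma equiv_trel: "equiv UNIV (trel K E F n)"
  unfolding trel_def
  by (intro equivI refl_rtrancl sym_rtrancl sym_Un_converse trans_rtrancl) simp

lemma tcls_eqI: "(p, q) \<in> trel K E F n \<Longrightarrow> tcls K E F n p = tcls K E F n q"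
  unfolding tcls_def by (rule equiv_class_eq[OF equiv_trel])

lemma trel_trep_tcls: "(p, trep (tcls K E F n p)) \<in> trel K E F n"
proof -
  have "p \<in> tcls K E F n p"
    by (simp add: tcls_def trel_def)
  then have "trep (tcls K E F n p) \<in> tcls K E F n p"
    unfolding trep_def by (rule someI)
  then show ?thesis
    by (simp add: tcls_def)
qed

lemma trel_fibprod:
  assumes "(p, q) \<in> trel K E F n" and "p \<in> fibprod E F n"
  shows "q \<in> fibprod E F n"
  using assms unfolding trel_def
  by (induction rule: rtrancl_induct) (auto simp: tgen_def)

lemma trel_invariant:
  assumes balanced: "\<And>k e f. k \<in> cells K n \<Longrightarrow> (e, f) \<in> fibprod E F n \<Longrightarrow>
      \<Phi> (act E n k e, f) = \<Phi> (e, act F n k f)"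
    and "(p, q) \<in> trel K E F n"
  shows "\<Phi> p = \<Phi> q"
  using assms(2) unfolding trel_def
proof (induction rule: rtrancl_induct)
  case (step q r)
  then show ?case
    by (auto simp: tgen_def balanced)
qed simp

lemma tensor_simps [simp]:
  "cells (tot (tensor K E F)) n = fibprod E F n // trel K E F n"
  "face (tot (tensor K E F)) n i c =
     tcls K E F (n - 1) (face (tot E) n i (fst (trep c)), face (tot F) n i (snd (trep c)))"
  "degen (tot (tensor K E F)) n i c =
     tcls K E F (Suc n) (degen (tot E) n i (fst (trep c)), degen (tot F) n i (snd (trep c)))"
  "act (tensor K E F) n k c = tcls K E F n (act E n k (fst (trep c)), snd (trep c))"
  "proj (tensor K E F) n c = proj E n (fst (trep c))"
  by (simp_all add: tensor_def)

lemma tcls_in_tensor: "p \<in> fibprod E F n \<Longrightarrow> tcls K E F n p \<in> cells (tot (tensor K E F)) n"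
  unfolding tensor_simps quotient_def tcls_def by auto

lemma tensor_trep:
  assumes "c \<in> cells (tot (tensor K E F)) n"
  shows "trep c \<in> fibprod E F n" and "c = tcls K E F n (trep c)"
proof -
  obtain p where p: "p \<in> fibprod E F n" "c = tcls K E F n p"
    using assms unfolding tensor_simps quotient_def tcls_def by auto
  show "trep c \<in> fibprod E F n"
    using trel_fibprod[OF trel_trep_tcls p(1)] p(2) by simp
  show "c = tcls K E F n (trep c)"
    using tcls_eqI[OF trel_trep_tcls[of p K E F n]] p(2) by simp
qed

context
  fixes K :: "'k sgrp" and X :: "'x sset" and E :: "('e, 'k, 'x) pbun" and F :: "('f, 'k, 'x) pbun"
  assumes E: "is_pbun K X E" and F: "is_pbun K X F"
begin

lemma fibprod_face:
  "i \<le> Suc n \<Longrightarrow> (e, f) \<in> fibprod E F (Suc n) \<Longrightarrow>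
   (face (tot E) (Suc n) i e, face (tot F) (Suc n) i f) \<in> fibprod E F n"
  by (auto simp: fibprod_def smap_face[OF pbun_proj_smap[OF E]] smap_face[OF pbun_proj_smap[OF F]]
      sset_face_closed[OF pbun_sset[OF E]] sset_face_closed[OF pbun_sset[OF F]])

lemma fibprod_degen:
  "i \<le> n \<Longrightarrow> (e, f) \<in> fibprod E F n \<Longrightarrow>
   (degen (tot E) n i e, degen (tot F) n i f) \<in> fibprod E F (Suc n)"
  by (auto simp: fibprod_def smap_degen[OF pbun_proj_smap[OF E]] smap_degen[OF pbun_proj_smap[OF F]]
      sset_degen_closed[OF pbun_sset[OF E]] sset_degen_closed[OF pbun_sset[OF F]])

lemma fibprod_act: "k \<in> cells K n \<Longrightarrow> (e, f) \<in> fibprod E F n \<Longrightarrow> (act E n k e, f) \<in> fibprod E F n"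
  using pbun_proj_eq_iff[OF E, of e n "act E n k e"]
  by (auto simp: fibprod_def pbun_act_closed[OF E])

lemma tensor_face_closed:
  "i \<le> Suc n \<Longrightarrow> c \<in> cells (tot (tensor K E F)) (Suc n) \<Longrightarrow>
   face (tot (tensor K E F)) (Suc n) i c \<in> cells (tot (tensor K E F)) n"
  unfolding tensor_simps(2) diff_Suc_1 by (intro tcls_in_tensor fibprod_face) (simp_all add: tensor_trep(1))

lemma tensor_degen_closed:
  "i \<le> n \<Longrightarrow> c \<in> cells (tot (tensor K E F)) n \<Longrightarrow>
   degen (tot (tensor K E F)) n i c \<in> cells (tot (tensor K E F)) (Suc n)"
  unfolding tensor_simps(3) by (intro tcls_in_tensor fibprod_degen) (simp_all add: tensor_trep(1))

lemma tensor_act_closed: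
  "k \<in> cells K n \<Longrightarrow> c \<in> cells (tot (tensor K E F)) n \<Longrightarrow>
   act (tensor K E F) n k c \<in> cells (tot (tensor K E F)) n"
  unfolding tensor_simps(4) by (intro tcls_in_tensor fibprod_act) (simp_all add: tensor_trep(1))

end

section \<open>Tensor products of twisted products\<close>

definition phi_rep :: "'k sgrp \<Rightarrow> nat \<Rightarrow> ('k \<times> 'x) \<times> ('k \<times> 'x) \<Rightarrow> 'k \<times> 'x" where
  "phi_rep K n p = (gmul K n (fst (fst p)) (fst (snd p)), snd (fst p))"

lemma phi_rep_simp [simp]: "phi_rep K n ((g, x), (h, y)) = (gmul K n g h, x)"
  by (simp add: phi_rep_def)

lemma phi_eq_phi_rep_trep: "phi K n c = phi_rep K n (trep c)"
  by (simp add: phi_def phi_rep_def)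

lemma tensor_trep_pairE:
  assumes "c \<in> cells (tot (tensor K E F)) n"
    and "cells (tot E) n = cells K n \<times> cells X n" "cells (tot F) n = cells K n \<times> cells X n"
    and "proj E n = snd" "proj F n = snd"
  obtains g h x where "trep c = ((g, x), (h, x))" "g \<in> cells K n" "h \<in> cells K n" "x \<in> cells X n"
proof -
  obtain e f where ef: "trep c = (e, f)" "e \<in> cells (tot E) n" "f \<in> cells (tot F) n"
    "proj E n e = proj F n f"
    using tensor_trep(1)[OF assms(1)] by (auto simp: fibprod_def)
  then show ?thesis
    using that assms(2-) by (cases e, cases f) auto
qed

context
  fixes K :: "'k sgrp" and X :: "'x sset"
  assumes K: "is_sab_group K"
begin

lemma phi_tcls: "phi K n (tcls K (tw_bun K X \<eta>) (tw_bun K X \<xi>) n p) = phi_rep K n p"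
proof -
  have "phi_rep K n p = phi_rep K n (trep (tcls K (tw_bun K X \<eta>) (tw_bun K X \<xi>) n p))"
    by (rule trel_invariant[OF _ trel_trep_tcls]) (auto simp: fibprod_def gmul_balanced[OF K])
  then show ?thesis
    by (simp add: phi_eq_phi_rep_trep)
qed

lemma trel_if_phi_rep_eq:
  assumes p: "p \<in> fibprod (tw_bun K X \<eta>) (tw_bun K X \<xi>) n"
    and q: "q \<in> fibprod (tw_bun K X \<eta>) (tw_bun K X \<xi>) n"
    and eq: "phi_rep K n p = phi_rep K n q"
  shows "(p, q) \<in> trel K (tw_bun K X \<eta>) (tw_bun K X \<xi>) n"
proof -
  obtain g h x where p_eq: "p = ((g, x), (h, x))"
    and cells_p: "g \<in> cells K n" "h \<in> cells K n" "x \<in> cells X n"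
    using p by (cases p) (auto simp: fibprod_def)
  obtain g' h' x' where "q = ((g', x'), (h', x'))" and cells_q: "g' \<in> cells K n" "h' \<in> cells K n"
    using q by (cases q) (auto simp: fibprod_def)
  then have pq: "p = ((g, x), (h, x))" "q = ((g', x), (h', x))"
    using p_eq eq by simp_all
  obtain k where k: "k \<in> cells K n" "g' = gmul K n k g"
    using gmul_solve_left[OF K cells_p(1) cells_q(1)] by blast
  have "gmul K n g (gmul K n k h') = gmul K n g h"
    using eq k cells_p cells_q by (simp add: pq gmul_balanced[OF K])
  then have h: "h = gmul K n k h'"
    using cells_p cells_q k by (simp add: K gmul_left_cancel)
  have "(q, p) \<in> tgen K (tw_bun K X \<eta>) (tw_bun K X \<xi>) n"
    unfolding tgen_def using pq k h cells_p cells_q K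
    by (auto simp: fibprod_def intro!: exI[of _ "(g, x)"])
  then show ?thesis
    unfolding trel_def by (intro r_into_rtrancl UnI2 converseI)
qed

lemma phi_tensor_closed:
  "c \<in> cells (tot (tensor K (tw_bun K X \<eta>) (tw_bun K X \<xi>))) n \<Longrightarrow>
   phi K n c \<in> cells K n \<times> cells X n"
  by (erule tensor_trep_pairE) (simp_all add: phi_eq_phi_rep_trep K)

lemma phi_tensor_act:
  assumes "k \<in> cells K n" and "c \<in> cells (tot (tensor K (tw_bun K X \<eta>) (tw_bun K X \<xi>))) n"
  shows "phi K n (act (tensor K (tw_bun K X \<eta>) (tw_bun K X \<xi>)) n k c) =
    act (tw_bun K X \<zeta>) n k (phi K n c)"
  using assms(2) by (rule tensor_trep_pairE)
    (use assms(1) in \<open>simp_all add: phi_tcls phi_eq_phi_rep_trep[of K n c] gmul_assoc[OF K]\<close>)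

lemma phi_tmap:
  "phi K n (tmap K (tw_bun K X \<eta>) (tw_bun K X \<xi>) f g n c) =
   phi_rep K n (f n (fst (trep c)), g n (snd (trep c)))"
  by (simp add: tmap_def phi_tcls)

lemma phi_tensor_face:
  assumes \<eta>: "twisting_function K X \<eta>" and \<xi>: "twisting_function K X \<xi>"
    and i: "i \<le> Suc n" and c: "c \<in> cells (tot (tensor K (tw_bun K X \<eta>) (tw_bun K X \<xi>))) (Suc n)"
  shows "phi K n (face (tot (tensor K (tw_bun K X \<eta>) (tw_bun K X \<xi>))) (Suc n) i c) =
    face (tw_sset K X (tw_mult K \<eta> \<xi>)) (Suc n) i (phi K (Suc n) c)"
proof -
  obtain g h x where rep: "trep c = ((g, x), (h, x))"
    and gh: "g \<in> cells K (Suc n)" "h \<in> cells K (Suc n)" and x: "x \<in> cells X (Suc n)"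
    using c by (rule tensor_trep_pairE) auto
  show ?thesis
  proof (cases "i = 0")
    case True
    have "face K (Suc n) 0 g \<in> cells K n" "face K (Suc n) 0 h \<in> cells K n"
      using gh by (simp_all add: sset_face_closed[OF sab_sset[OF K]])
    then show ?thesis
      using True gh twisting_function.closed[OF \<eta> x] twisting_function.closed[OF \<xi> x]
      by (simp add: rep phi_tcls phi_eq_phi_rep_trep[of K "Suc n" c] tw_mult_def face_gmul[OF K]
          gmul_interchange[OF K])
  qed (use i gh in \<open>simp add: rep phi_tcls phi_eq_phi_rep_trep[of K "Suc n" c] face_gmul[OF K]\<close>)
qed

lemma phi_tensor_degen:
  assumes "i \<le> n" and c: "c \<in> cells (tot (tensor K (tw_bun K X \<eta>) (tw_bun K X \<xi>))) n"
  shows "phi K (Suc n) (degen (tot (tensor K (tw_bun K X \<eta>) (tw_bun K X \<xi>))) n i c) =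
    degen (tw_sset K X (tw_mult K \<eta> \<xi>)) n i (phi K n c)"
  using c by (rule tensor_trep_pairE)
    (use assms(1) in \<open>simp_all add: phi_tcls phi_eq_phi_rep_trep[of K n c] degen_gmul[OF K]\<close>)

lemma phi_assoc_coherence:
  assumes w: "w \<in> cells (tot (tensor K (tw_bun K X \<eta>) (tensor K (tw_bun K X \<xi>) (tw_bun K X \<zeta>)))) n"
  shows "phi K n (tmap K (tw_bun K X (tw_mult K \<eta> \<xi>)) (tw_bun K X \<zeta>) (phi K) (\<lambda>m z. z) n
            (assocB K (tw_bun K X \<eta>) (tw_bun K X \<xi>) (tw_bun K X \<zeta>) n w))
         = phi K n (tmap K (tw_bun K X \<eta>) (tw_bun K X (tw_mult K \<xi> \<zeta>)) (\<lambda>m z. z) (phi K) n w)"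
proof -
  let ?A = "tw_bun K X \<eta>" and ?B = "tw_bun K X \<xi>" and ?C = "tw_bun K X \<zeta>"
  let ?\<Phi> = "\<lambda>q. phi_rep K n (phi K n (fst q), snd q)"
  obtain e c' where w_rep: "trep w = (e, c')" and e: "e \<in> cells K n \<times> cells X n"
    and c': "c' \<in> cells (tot (tensor K ?B ?C)) n" and proj: "snd e = proj (tensor K ?B ?C) n c'"
    using tensor_trep(1)[OF w] by (auto simp: fibprod_def)
  obtain g x where e_eq: "e = (g, x)" and g: "g \<in> cells K n" using e by auto
  obtain h l y where c'_rep: "trep c' = ((h, y), (l, y))" and hl: "h \<in> cells K n" "l \<in> cells K n"
    using c' by (rule tensor_trep_pairE) auto
  have y: "y = x"
    using proj by (simp add: e_eq c'_rep)
  define q where "q = (tcls K ?A ?B n (e, (h, x)), (l, x))"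
  have assoc_w: "assocB K ?A ?B ?C n w = tcls K (tensor K ?A ?B) ?C n q"
    by (simp add: assocB_def q_def w_rep c'_rep y)
  txt \<open>The left side evaluates ?\<Phi> on the representative of assocB w chosen by trep, and ?\<Phi> is
    constant on classes because it is balanced.\<close>
  have "?\<Phi> q = ?\<Phi> (trep (tcls K (tensor K ?A ?B) ?C n q))"
  proof (rule trel_invariant[OF _ trel_trep_tcls])
    fix k e f assume k: "k \<in> cells K n" and ef: "(e, f) \<in> fibprod (tensor K ?A ?B) ?C n"
    then obtain a z l' z' where "phi K n e = (a, z)" "a \<in> cells K n" "f = (l', z')" "l' \<in> cells K n"
      using phi_tensor_closed by (force simp: fibprod_def)
    then show "?\<Phi> (act (tensor K ?A ?B) n k e, f) = ?\<Phi> (e, act ?C n k f)"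
      using k ef phi_tensor_act[OF k, where \<zeta> = \<zeta>] by (auto simp: fibprod_def gmul_balanced[OF K])
  qed
  then have "phi K n (tmap K (tw_bun K X (tw_mult K \<eta> \<xi>)) ?C (phi K) (\<lambda>m z. z) n (assocB K ?A ?B ?C n w))
      = (gmul K n (gmul K n g h) l, x)"
    by (simp add: phi_tmap assoc_w q_def e_eq phi_tcls)
  also have "\<dots> = phi K n (tmap K ?A (tw_bun K X (tw_mult K \<xi> \<zeta>)) (\<lambda>m z. z) (phi K) n w)"
    using g hl by (simp add: phi_tmap w_rep e_eq phi_eq_phi_rep_trep[of K n c'] c'_rep gmul_assoc[OF K])
  finally show ?thesis .
qed

lemma phi_lunit_coherence:
  "c \<in> cells (tot (tensor K (prod_bun K X) (tw_bun K X \<eta>))) n \<Longrightarrow>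
   phi K n (tmap K (tw_bun K X (tw_one K)) (tw_bun K X \<eta>) (\<lambda>m z. z) (\<lambda>m z. z) n c) =
   lunitB (tw_bun K X \<eta>) n c"
  by (erule tensor_trep_pairE) (simp_all add: phi_tmap lunitB_def)

lemma phi_runit_coherence:
  "c \<in> cells (tot (tensor K (tw_bun K X \<eta>) (prod_bun K X))) n \<Longrightarrow>
   phi K n (tmap K (tw_bun K X \<eta>) (tw_bun K X (tw_one K)) (\<lambda>m z. z) (\<lambda>m z. z) n c) =
   runitB (tw_bun K X \<eta>) n c"
  by (erule tensor_trep_pairE) (simp_all add: phi_tmap runitB_def gmul_comm[OF K])

lemma phi_braid_coherence:
  "c \<in> cells (tot (tensor K (tw_bun K X \<eta>) (tw_bun K X \<xi>))) n \<Longrightarrow>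
   phi K n (braidB K (tw_bun K X \<eta>) (tw_bun K X \<xi>) n c) = phi K n c"
  by (erule tensor_trep_pairE) (simp_all add: braidB_def phi_tcls phi_eq_phi_rep_trep[of K n c] gmul_comm[OF K])

end

lemma bun_iso_tensor_tw_bun:
  assumes K: "is_sab_group K" and X: "is_sset X"
    and \<eta>: "is_twisting K X \<eta>" and \<xi>: "is_twisting K X \<xi>"
  shows "bun_iso K X (tensor K (tw_bun K X \<eta>) (tw_bun K X \<xi>)) (tw_bun K X (tw_mult K \<eta> \<xi>)) (phi K)"
proof -
  let ?A = "tw_bun K X \<eta>" and ?B = "tw_bun K X \<xi>" and ?C = "tw_bun K X (tw_mult K \<eta> \<xi>)"
  have tw_\<eta>: "twisting_function K X \<eta>" and tw_\<xi>: "twisting_function K X \<xi>"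
    using \<eta> \<xi> by (simp_all add: is_twisting_iff_twisting_function[OF K X])
  have C: "is_pbun K X ?C"
    using is_pbun_tw_bun[OF K X is_twisting_tw_mult[OF K X \<eta> \<xi>]] .
  have A: "is_pbun K X ?A" and B: "is_pbun K X ?B"
    using is_pbun_tw_bun[OF K X] \<eta> \<xi> by blast+
  show ?thesis
  proof (rule bun_iso_if_bij_bun_hom[OF K C])
    show "bun_hom K X (tensor K ?A ?B) ?C (phi K)"
    proof (intro bun_homI smapI)
      fix n c assume "c \<in> cells (tot (tensor K ?A ?B)) n"
      from phi_tensor_closed[OF K this] show "phi K n c \<in> cells (tot ?C) n"
        by simp
    next
      fix n i c assume "i \<le> Suc n" "c \<in> cells (tot (tensor K ?A ?B)) (Suc n)"
      then show "phi K n (face (tot (tensor K ?A ?B)) (Suc n) i c) = face (tot ?C) (Suc n) i (phi K (Suc n) c)"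
        using phi_tensor_face[OF K tw_\<eta> tw_\<xi>] by simp
    next
      fix n i c assume "i \<le> n" "c \<in> cells (tot (tensor K ?A ?B)) n"
      then show "phi K (Suc n) (degen (tot (tensor K ?A ?B)) n i c) = degen (tot ?C) n i (phi K n c)"
        using phi_tensor_degen[OF K] by simp
    next
      fix n k c assume "k \<in> cells K n" "c \<in> cells (tot (tensor K ?A ?B)) n"
      then show "phi K n (act (tensor K ?A ?B) n k c) = act ?C n k (phi K n c)"
        by (rule phi_tensor_act[OF K])
    next
      fix n c assume "c \<in> cells (tot (tensor K ?A ?B)) n"
      then show "proj ?C n (phi K n c) = proj (tensor K ?A ?B) n c"
        by (simp add: phi_eq_phi_rep_trep phi_rep_def)
    qed
  next
    fix n
    show "bij_betw (phi K n) (cells (tot (tensor K ?A ?B)) n) (cells (tot ?C) n)"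
    proof (rule bij_betwI')
      fix c c' assume c: "c \<in> cells (tot (tensor K ?A ?B)) n" and c': "c' \<in> cells (tot (tensor K ?A ?B)) n"
      show "phi K n c = phi K n c' \<longleftrightarrow> c = c'"
        using tcls_eqI[OF trel_if_phi_rep_eq[OF K tensor_trep(1)[OF c] tensor_trep(1)[OF c']]]
          tensor_trep(2)[OF c] tensor_trep(2)[OF c'] by (auto simp: phi_eq_phi_rep_trep)
    next
      fix c assume "c \<in> cells (tot (tensor K ?A ?B)) n"
      from phi_tensor_closed[OF K this] show "phi K n c \<in> cells (tot ?C) n"
        by simp
    next
      fix y assume "y \<in> cells (tot ?C) n"
      then obtain g x where y: "y = (g, x)" "g \<in> cells K n" "x \<in> cells X n" by auto
      then have p: "((g, x), (gone K n, x)) \<in> fibprod ?A ?B n"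
        using K by (simp add: fibprod_def)
      show "\<exists>c \<in> cells (tot (tensor K ?A ?B)) n. y = phi K n c"
        using y K by (intro bexI[OF _ tcls_in_tensor[OF p]]) (simp add: phi_tcls[OF K])
    qed
  qed (use tensor_face_closed[OF A B] tensor_degen_closed[OF A B] tensor_act_closed[OF A B] in auto)
qed

theorem mainTheorem19:
  fixes K :: "'k sgrp" and X :: "'x sset"
  assumes "is_sab_group K" and "is_sset X"
  shows
    \<comment> \<open>Twist_K(X) is closed under the unit and the product\<close>
    "is_twisting K X (tw_one K) \<and>
     (\<forall>\<eta> \<xi>. is_twisting K X \<eta> \<and> is_twisting K X \<xi> \<longrightarrow> is_twisting K X (tw_mult K \<eta> \<xi>)) \<and>
     \<comment> \<open>unit structure isomorphism K x X \<cong> K x_1 X (canonical, identity on elements)\<close>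
     bun_iso K X (prod_bun K X) (tw_bun K X (tw_one K)) (\<lambda>n z. z) \<and>
     \<comment> \<open>product structure isomorphisms\<close>
     (\<forall>\<eta> \<xi>. is_twisting K X \<eta> \<and> is_twisting K X \<xi> \<longrightarrow>
        bun_iso K X (tensor K (tw_bun K X \<eta>) (tw_bun K X \<xi>)) (tw_bun K X (tw_mult K \<eta> \<xi>)) (phi K)) \<and>
     \<comment> \<open>associativity coherence\<close>
     (\<forall>\<eta> \<xi> \<zeta>. is_twisting K X \<eta> \<and> is_twisting K X \<xi> \<and> is_twisting K X \<zeta> \<longrightarrow>
        (\<forall>n. \<forall>w \<in> cells (tot (tensor K (tw_bun K X \<eta>)
                     (tensor K (tw_bun K X \<xi>) (tw_bun K X \<zeta>)))) n.
           phi K n (tmap K (tw_bun K X (tw_mult K \<eta> \<xi>)) (tw_bun K X \<zeta>) (phi K) (\<lambda>m z. z) n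
              (assocB K (tw_bun K X \<eta>) (tw_bun K X \<xi>) (tw_bun K X \<zeta>) n w))
           = phi K n (tmap K (tw_bun K X \<eta>) (tw_bun K X (tw_mult K \<xi> \<zeta>)) (\<lambda>m z. z) (phi K) n w))) \<and>
     \<comment> \<open>unit coherence (left and right)\<close>
     (\<forall>\<eta>. is_twisting K X \<eta> \<longrightarrow>
        (\<forall>n. \<forall>c \<in> cells (tot (tensor K (prod_bun K X) (tw_bun K X \<eta>))) n.
           phi K n (tmap K (tw_bun K X (tw_one K)) (tw_bun K X \<eta>) (\<lambda>m z. z) (\<lambda>m z. z) n c)
           = lunitB (tw_bun K X \<eta>) n c) \<and>
        (\<forall>n. \<forall>c \<in> cells (tot (tensor K (tw_bun K X \<eta>) (prod_bun K X))) n.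
           phi K n (tmap K (tw_bun K X \<eta>) (tw_bun K X (tw_one K)) (\<lambda>m z. z) (\<lambda>m z. z) n c)
           = runitB (tw_bun K X \<eta>) n c)) \<and>
     \<comment> \<open>symmetry coherence\<close>
     (\<forall>\<eta> \<xi>. is_twisting K X \<eta> \<and> is_twisting K X \<xi> \<longrightarrow>
        (\<forall>n. \<forall>c \<in> cells (tot (tensor K (tw_bun K X \<eta>) (tw_bun K X \<xi>))) n.
           phi K n (braidB K (tw_bun K X \<eta>) (tw_bun K X \<xi>) n c) = phi K n c))"
  by (intro conjI allI impI ballI is_twisting_tw_one[OF assms] is_twisting_tw_mult[OF assms]
      bun_iso_prod_bun_tw_one[OF assms] bun_iso_tensor_tw_bun[OF assms]
      phi_assoc_coherence[OF assms(1)] phi_lunit_coherence[OF assms(1)]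
      phi_runit_coherence[OF assms(1)] phi_braid_coherence[OF assms(1)]) auto

end
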